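(* Consider a point $x^*$ with associated class $y^*$ and a perturbation radius $\epsilon>0$. Assume that $\operatorname{arg\,max}_{c \in \{1,\ldots,C\} } \hat{\mathbb{E}}^N_{IBP,\epsilon}(x^* ) = y^*$. Then \[ \operatorname{arg\,max}_{c \in \{1,\ldots,C\} } \hat{\mathbb{E}}^N(\bar{x}) = y^* \quad \text{for all } \bar{x} \text{ such that } |x^*-\bar{x}| \leq \epsilon. \] As a consequence, given test points $x_i^*$ with class labels $y_i^*$, $i=1,\ldots,m$, the robust accuracy satisfies \[ \mathcal{R}_\epsilon \geq \frac{1}{m}\sum_{i=1}^m \mathbb{I}\left[ \operatorname{arg\,max}_{c \in \{1,\ldots,C\} } \hat{\mathbb{E}}^N_{IBP,\epsilon}(x_i^* ) = y_i^* \right]=:\mathcal{R}_\epsilon^{IBP}. \]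
   Context: A neural network $f^w:\mathbb{R}^n\to\mathbb{R}^C$ with weights $w$ is given, with a (approximate) posterior over weights $p(w\mid\mathcal{D})$. With $w_1,\dots,w_N$ fixed samples from the posterior and $\sigma$ the softmax, the empirical predictor is $\hat{\mathbb{E}}^N(x)=\frac1N\sum_{i=1}^N\sigma(f^{w_i}(x))$, and the predicted class is its argmax. For $\epsilon>0$ and a given norm $|\cdot|$ (an $\ell_\infty$-ball for IBP), the robust accuracy on test points $x_i^*$ with labels $c_i^*$ is $\mathcal{R}_\epsilon=\frac1m\sum_{i=1}^m\mathbb{I}[\forall \bar x \text{ with } |x_i^*-\bar x|\le\epsilon:\ \operatorname{arg\,max}_c \hat{\mathbb{E}}^N(\bar x)=c_i^*]$, where $\mathbb{I}[\cdot]$ is the indicator. Interval Bound Propagation (IBP) applied to the network with weights $w$ and the $\epsilon$-ball around $x$ yields logit bounds $f^{w,L,\epsilon}\le f^w(x')\le f^{w,U,\epsilon}$ valid for all $x'$ in the ball (propagating centre $\hat\mu_k=(\phi^U_{k-1}+\phi^L_{k-1})/2$ and radius $\hat r_k=(\phi^U_{k-1}-\phi^L_{k-1})/2$ through each layer as $\mu_k=W_{k-1}\hat\mu_k+b_{k-1}$, $r_k=|W_{k-1}|\hat r_k$, bounds $\mu_k\pm r_k$, then through the monotone activation). For true class $y$ define $f^{w,\epsilon}_{LB}(x)$ with $j$-th entry $f^{w,U,\epsilon}_j$ if $j\ne y$ and $f^{w,L,\epsilon}_j$ if $j=y$; for $c'\ne y$ define $f^{w,\epsilon,c'}_{UB}(x)$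 with $j$-th entry $f^{w,L,\epsilon}_j$ if $j\ne c'$ and $f^{w,U,\epsilon}_j$ if $j=c'$. Set $\hat{\mathbb{E}}^{N,\epsilon}_{y,LB}=\frac1N\sum_i\sigma_y(f^{w_i,\epsilon}_{LB}(x))$ and $\hat{\mathbb{E}}^{N,\epsilon}_{c',UB}=\frac1N\sum_i\sigma_{c'}(f^{w_i,\epsilon,c'}_{UB}(x))$. The worst-case IBP predictor $\hat{\mathbb{E}}^N_{IBP,\epsilon}(x)\in\mathbb{R}^C$ has $y$-th entry $\hat{\mathbb{E}}^{N,\epsilon}_{y,LB}$ and $c'$-th entry $\hat{\mathbb{E}}^{N,\epsilon}_{c',UB}$ for $c'\ne y$. *)

theory Defs
  imports Complex_Main
begin

text \<open>Vectors in R^d are represented as functions nat => real, only the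
  components with index < d being meaningful.  A layer is
  (W, b, m, k, act): weight matrix W (k x m), bias b (length k), input
  dimension m, output dimension k, and an activation act applied
  componentwise (use act = id for a purely affine last layer).\<close>

type_synonym layer = "(nat \<Rightarrow> nat \<Rightarrow> real) \<times> (nat \<Rightarrow> real) \<times> nat \<times> nat \<times> (real \<Rightarrow> real)"

fun wf_net :: "nat \<Rightarrow> layer list \<Rightarrow> nat \<Rightarrow> bool" where
  "wf_net n [] C = (n = C)"
| "wf_net n ((W, b, m, k, act) # Ls) C = (m = n \<and> wf_net k Ls C)"

definition mono_acts :: "layer list \<Rightarrow> bool" where
  "mono_acts Ls = (\<forall>(W, b, m, k, act) \<in> set Ls. mono act)"

fun fwd :: "layer list \<Rightarrow> (nat \<Rightarrow> real) \<Rightarrow> (nat \<Rightarrow> real)" where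
  "fwd [] x = x"
| "fwd ((W, b, m, k, act) # Ls) x = fwd Ls (\<lambda>i. act ((\<Sum>j<m. W i j * x j) + b i))"

fun ibp :: "layer list \<Rightarrow> (nat \<Rightarrow> real) \<times> (nat \<Rightarrow> real) \<Rightarrow> (nat \<Rightarrow> real) \<times> (nat \<Rightarrow> real)" where
  "ibp [] LU = LU"
| "ibp ((W, b, m, k, act) # Ls) (L, U) =
     (let mu_hat = (\<lambda>j. (U j + L j) / 2);
          r_hat = (\<lambda>j. (U j - L j) / 2);
          mu = (\<lambda>i. (\<Sum>j<m. W i j * mu_hat j) + b i);
          r = (\<lambda>i. \<Sum>j<m. \<bar>W i j\<bar> * r_hat j)
      in ibp Ls (\<lambda>i. act (mu i - r i), \<lambda>i. act (mu i + r i)))"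

definition ibp_logits :: "layer list \<Rightarrow> real \<Rightarrow> (nat \<Rightarrow> real) \<Rightarrow> (nat \<Rightarrow> real) \<times> (nat \<Rightarrow> real)" where
  "ibp_logits Ls eps x = ibp Ls (\<lambda>j. x j - eps, \<lambda>j. x j + eps)"

definition in_ball :: "nat \<Rightarrow> real \<Rightarrow> (nat \<Rightarrow> real) \<Rightarrow> (nat \<Rightarrow> real) \<Rightarrow> bool" where
  "in_ball n eps x xb = (\<forall>j<n. \<bar>x j - xb j\<bar> \<le> eps)"

definition softmax :: "nat \<Rightarrow> (nat \<Rightarrow> real) \<Rightarrow> nat \<Rightarrow> real" where
  "softmax C z c = exp (z c) / (\<Sum>j<C. exp (z j))"

definition emp_pred :: "nat \<Rightarrow> nat \<Rightarrow> (nat \<Rightarrow> layer list) \<Rightarrow> (nat \<Rightarrow> real) \<Rightarrow> nat \<Rightarrow> real" where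
  "emp_pred C N ws x c = (1 / real N) * (\<Sum>i<N. softmax C (fwd (ws i) x) c)"

definition f_LB :: "nat \<Rightarrow> (nat \<Rightarrow> real) \<times> (nat \<Rightarrow> real) \<Rightarrow> nat \<Rightarrow> real" where
  "f_LB y LU j = (if j \<noteq> y then snd LU j else fst LU j)"

definition f_UB :: "nat \<Rightarrow> (nat \<Rightarrow> real) \<times> (nat \<Rightarrow> real) \<Rightarrow> nat \<Rightarrow> real" where
  "f_UB c' LU j = (if j \<noteq> c' then fst LU j else snd LU j)"

definition ibp_pred :: "nat \<Rightarrow> nat \<Rightarrow> (nat \<Rightarrow> layer list) \<Rightarrow> real \<Rightarrow> (nat \<Rightarrow> real) \<Rightarrow> nat \<Rightarrow> nat \<Rightarrow> real" where
  "ibp_pred C N ws eps x y c =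
     (if c = y then (1 / real N) * (\<Sum>i<N. softmax C (f_LB y (ibp_logits (ws i) eps x)) y)
      else (1 / real N) * (\<Sum>i<N. softmax C (f_UB c (ibp_logits (ws i) eps x)) c))"

text \<open>"argmax over {0..<C} of v equals y": y is the unique maximiser.\<close>
definition argmax_is :: "nat \<Rightarrow> (nat \<Rightarrow> real) \<Rightarrow> nat \<Rightarrow> bool" where
  "argmax_is C v y = (y < C \<and> (\<forall>c<C. c \<noteq> y \<longrightarrow> v c < v y))"

definition robust_acc :: "nat \<Rightarrow> nat \<Rightarrow> nat \<Rightarrow> (nat \<Rightarrow> layer list) \<Rightarrow> real \<Rightarrow> nat \<Rightarrow> (nat \<Rightarrow> nat \<Rightarrow> real) \<Rightarrow> (nat \<Rightarrow> nat) \<Rightarrow> real" where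
  "robust_acc n C N ws eps m xs ys =
     (1 / real m) * (\<Sum>i<m. of_bool (\<forall>xb. in_ball n eps (xs i) xb \<longrightarrow> argmax_is C (emp_pred C N ws xb) (ys i)))"

definition ibp_acc :: "nat \<Rightarrow> nat \<Rightarrow> (nat \<Rightarrow> layer list) \<Rightarrow> real \<Rightarrow> nat \<Rightarrow> (nat \<Rightarrow> nat \<Rightarrow> real) \<Rightarrow> (nat \<Rightarrow> nat) \<Rightarrow> real" where
  "ibp_acc C N ws eps m xs ys =
     (1 / real m) * (\<Sum>i<m. of_bool (argmax_is C (ibp_pred C N ws eps (xs i) (ys i)) (ys i)))"

end

theory Submission
  imports Defs
begin

text \<open>Interval bound propagation is sound: an affine map sends the box with centre \<open>\<mu>\<close> and
  radius \<open>r\<close> into the box with centre \<open>W\<mu> + b\<close> and radius \<open>|W| r\<close>, and a monotone activation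
  maps enclosing intervals to enclosing intervals, so by induction over the layers the IBP logit
  bounds enclose the logits of every input in the \<open>\<epsilon>\<close>-ball.  The \<open>c\<close>-th softmax component is
  increasing in the \<open>c\<close>-th logit and decreasing in the others; hence the worst-case IBP predictor
  under-estimates the empirical predictor on the true class and over-estimates it on every other
  class, uniformly over the ball.  A strict argmax of the former is thus one of the latter, and
  comparing the two accuracies term by term gives the bound on the robust accuracy.\<close>

lemma abs_sum_mult_sub_centre_le:
  fixes W x L U :: "nat \<Rightarrow> real"
  assumes "\<And>j. j < m \<Longrightarrow> L j \<le> x j \<and> x j \<le> U j"
  shows "\<bar>(\<Sum>j<m. W j * x j) - (\<Sum>j<m. W j * ((U j + L j) / 2))\<bar>
           \<le> (\<Sum>j<m. \<bar>W j\<bar> * ((U j - L j) / 2))"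
proof -
  have "\<bar>(\<Sum>j<m. W j * x j) - (\<Sum>j<m. W j * ((U j + L j) / 2))\<bar>
        = \<bar>\<Sum>j<m. W j * (x j - (U j + L j) / 2)\<bar>"
    by (simp add: sum_subtractf[symmetric] algebra_simps)
  also have "\<dots> \<le> (\<Sum>j<m. \<bar>W j * (x j - (U j + L j) / 2)\<bar>)"
    by (rule sum_abs)
  also have "\<dots> \<le> (\<Sum>j<m. \<bar>W j\<bar> * ((U j - L j) / 2))"
  proof (rule sum_mono)
    fix j assume "j \<in> {..<m}"
    then have "\<bar>x j - (U j + L j) / 2\<bar> \<le> (U j - L j) / 2"
      using assms by (auto simp: abs_real_def field_simps)
    then show "\<bar>W j * (x j - (U j + L j) / 2)\<bar> \<le> \<bar>W j\<bar> * ((U j - L j) / 2)"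
      unfolding abs_mult by (rule mult_left_mono) auto
  qed
  finally show ?thesis .
qed

lemma fwd_within_ibp:
  assumes "wf_net n Ls C" "mono_acts Ls" "\<And>j. j < n \<Longrightarrow> fst LU j \<le> x j \<and> x j \<le> snd LU j"
    and "j < C"
  shows "fst (ibp Ls LU) j \<le> fwd Ls x j \<and> fwd Ls x j \<le> snd (ibp Ls LU) j"
  using assms
proof (induction Ls arbitrary: n LU x)
  case Nil
  then show ?case by simp
next
  case (Cons layer Ls)
  obtain W b m k act where layer: "layer = (W, b, m, k, act)" by (cases layer) auto
  obtain L U where LU: "LU = (L, U)" by (cases LU) auto
  have "m = n" and wf: "wf_net k Ls C" using Cons.prems(1) layer by auto
  have "mono act" and mono: "mono_acts Ls" using Cons.prems(2) layer by (auto simp: mono_acts_def)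
  define mu where "mu = (\<lambda>i. (\<Sum>j<m. W i j * ((U j + L j) / 2)) + b i)"
  define r where "r = (\<lambda>i. \<Sum>j<m. \<bar>W i j\<bar> * ((U j - L j) / 2))"
  define x' where "x' = (\<lambda>i. act ((\<Sum>j<m. W i j * x j) + b i))"
  have hidden: "act (mu i - r i) \<le> x' i \<and> x' i \<le> act (mu i + r i)" for i
  proof -
    have "\<bar>(\<Sum>j<m. W i j * x j) - (\<Sum>j<m. W i j * ((U j + L j) / 2))\<bar> \<le> r i"
      unfolding r_def by (rule abs_sum_mult_sub_centre_le) (use Cons.prems(3) LU \<open>m = n\<close> in auto)
    then have "mu i - r i \<le> (\<Sum>j<m. W i j * x j) + b i" "(\<Sum>j<m. W i j * x j) + b i \<le> mu i + r i"
      unfolding mu_def by linarith+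
    then show ?thesis
      unfolding x'_def using \<open>mono act\<close> by (auto simp: mono_def)
  qed
  have "fst (ibp Ls (\<lambda>i. act (mu i - r i), \<lambda>i. act (mu i + r i))) j \<le> fwd Ls x' j \<and>
        fwd Ls x' j \<le> snd (ibp Ls (\<lambda>i. act (mu i - r i), \<lambda>i. act (mu i + r i))) j"
    using Cons.IH[OF wf mono] hidden Cons.prems(4) by simp
  then show ?case using layer LU by (simp add: mu_def r_def x'_def Let_def)
qed

lemma fwd_within_ibp_logits:
  assumes "wf_net n Ls C" "mono_acts Ls" "in_ball n eps x xb" "j < C"
  shows "fst (ibp_logits Ls eps x) j \<le> fwd Ls xb j \<and> fwd Ls xb j \<le> snd (ibp_logits Ls eps x) j"
  unfolding ibp_logits_def
  by (rule fwd_within_ibp[OF assms(1,2) _ assms(4)])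
     (use assms(3) in \<open>auto simp: in_ball_def abs_le_iff\<close>)

lemma divide_add_mono:
  fixes a a' s s' :: real
  assumes "0 < a" "a \<le> a'" "0 \<le> s'" "s' \<le> s"
  shows "a / (a + s) \<le> a' / (a' + s')"
proof -
  have "a * s' \<le> a' * s" using assms by (meson less_imp_le mult_mono order_trans)
  then have "a * (a' + s') \<le> a' * (a + s)" by (simp add: algebra_simps)
  then show ?thesis using assms by (simp add: divide_simps)
qed

lemma softmax_mono:
  assumes "c < C" "z' c \<le> z c" "\<And>j. j < C \<Longrightarrow> j \<noteq> c \<Longrightarrow> z j \<le> z' j"
  shows "softmax C z' c \<le> softmax C z c"
proof -
  have split: "(\<Sum>j<C. exp (w j)) = exp (w c) + (\<Sum>j\<in>{..<C}-{c}. exp (w j))" for w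
    using assms(1) by (simp add: sum.remove)
  have "(\<Sum>j\<in>{..<C}-{c}. exp (z j)) \<le> (\<Sum>j\<in>{..<C}-{c}. exp (z' j))"
    using assms(3) by (intro sum_mono) auto
  then have "exp (z' c) / (exp (z' c) + (\<Sum>j\<in>{..<C}-{c}. exp (z' j)))
             \<le> exp (z c) / (exp (z c) + (\<Sum>j\<in>{..<C}-{c}. exp (z j)))"
    by (intro divide_add_mono) (use assms(2) in \<open>auto intro: sum_nonneg\<close>)
  then show ?thesis unfolding softmax_def split .
qed

lemma argmax_is_mono:
  assumes "argmax_is C v y" "v y \<le> w y" "\<And>c. c < C \<Longrightarrow> c \<noteq> y \<Longrightarrow> w c \<le> v c"
  shows "argmax_is C w y"
  using assms unfolding argmax_is_def by force

context
  fixes n C N :: nat and ws :: "nat \<Rightarrow> layer list"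
  assumes wf: "\<And>i. i < N \<Longrightarrow> wf_net n (ws i) C"
    and mono: "\<And>i. i < N \<Longrightarrow> mono_acts (ws i)"
begin

lemma ibp_pred_le_emp_pred_true_class:
  assumes "in_ball n eps x xb" "y < C"
  shows "ibp_pred C N ws eps x y y \<le> emp_pred C N ws xb y"
  unfolding ibp_pred_def emp_pred_def
proof (simp, intro divide_right_mono sum_mono)
  fix i assume "i \<in> {..<N}"
  then show "softmax C (f_LB y (ibp_logits (ws i) eps x)) y \<le> softmax C (fwd (ws i) xb) y"
    using fwd_within_ibp_logits[OF wf mono assms(1)] assms(2)
    by (auto intro!: softmax_mono simp: f_LB_def)
qed auto

lemma emp_pred_le_ibp_pred_other_class:
  assumes "in_ball n eps x xb" "c < C" "c \<noteq> y"
  shows "emp_pred C N ws xb c \<le> ibp_pred C N ws eps x y c"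
  unfolding ibp_pred_def emp_pred_def using assms(3)
proof (simp, intro divide_right_mono sum_mono)
  fix i assume "i \<in> {..<N}"
  then show "softmax C (fwd (ws i) xb) c \<le> softmax C (f_UB c (ibp_logits (ws i) eps x)) c"
    using fwd_within_ibp_logits[OF wf mono assms(1)] assms(2)
    by (auto intro!: softmax_mono simp: f_UB_def)
qed auto

lemma ibp_certifies_robustness:
  assumes "argmax_is C (ibp_pred C N ws eps x y) y" "in_ball n eps x xb"
  shows "argmax_is C (emp_pred C N ws xb) y"
proof (rule argmax_is_mono[OF assms(1)])
  have "y < C" using assms(1) by (simp add: argmax_is_def)
  then show "ibp_pred C N ws eps x y y \<le> emp_pred C N ws xb y"
    by (rule ibp_pred_le_emp_pred_true_class[OF assms(2)])
  show "emp_pred C N ws xb c \<le> ibp_pred C N ws eps x y c" if "c < C" "c \<noteq> y" for c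
    using emp_pred_le_ibp_pred_other_class[OF assms(2) that] .
qed

lemma ibp_acc_le_robust_acc: "ibp_acc C N ws eps m xs ys \<le> robust_acc n C N ws eps m xs ys"
  unfolding robust_acc_def ibp_acc_def
  by (intro mult_left_mono sum_mono) (auto intro: ibp_certifies_robustness)

end

theorem theorem1:
  fixes n C N :: nat and ws :: "nat \<Rightarrow> layer list" and eps :: real
    and x :: "nat \<Rightarrow> real" and y :: nat
    and m :: nat and xs :: "nat \<Rightarrow> nat \<Rightarrow> real" and ys :: "nat \<Rightarrow> nat"
  assumes eps_pos: "eps > 0"
    and wf: "\<And>i. i < N \<Longrightarrow> wf_net n (ws i) C"
    and mono: "\<And>i. i < N \<Longrightarrow> mono_acts (ws i)"
  shows "(argmax_is C (ibp_pred C N ws eps x y) y \<longrightarrow>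
            (\<forall>xb. in_ball n eps x xb \<longrightarrow> argmax_is C (emp_pred C N ws xb) y))
         \<and> robust_acc n C N ws eps m xs ys \<ge> ibp_acc C N ws eps m xs ys"
  using ibp_certifies_robustness[where ws = ws, OF wf mono] ibp_acc_le_robust_acc[where ws = ws, OF wf mono]
  by blast

end
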